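(* As formal power series in $q$ whose coefficients are polynomials in $z$ (equivalently, as an identity of analytic functions for $|q|<1$ and $|z|$ sufficiently small), \[ \sum_{n=1}^{\infty} \frac{q^n}{(zq^n;q)_{n+1}\,(zq^{2n+2};q^2)_{\infty}} =\sum_{n=0}^{\infty} \frac{z^nq^{2n^2+2n+1}}{(q;q^2)_{n+1}\,(zq;q^2)_{n+1}}, \] and \[ \sum_{n=0}^{\infty} q^n\,(-zq^{n+1};q)_{n}\,(-zq^{2n+2};q^2)_{\infty} =\sum_{n=0}^{\infty} \frac{z^n q^{n^2+n}}{(q;q^2)_{n+1}}. \]
   Context: For $a$ and $q$, $(a;q)_0:=1$, $(a;q)_n:=(1-a)(1-aq)\cdots(1-aq^{n-1})$ for $n\ge1$, and $(a;q)_\infty:=\lim_{n\to\infty}(a;q)_n$ for $|q|<1$. *)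

theory Defs
  imports "HOL-Analysis.Analysis"
begin

definition qpoch :: "complex \<Rightarrow> complex \<Rightarrow> nat \<Rightarrow> complex" where
  "qpoch a q n = (\<Prod>k<n. (1 - a * q ^ k))"

definition qpoch_inf :: "complex \<Rightarrow> complex \<Rightarrow> complex" where
  "qpoch_inf a q = lim (\<lambda>n. qpoch a q n)"

end

theory Submission
  imports Defs
begin

(* Read each side of either identity as a function F(z) of z, for fixed q. Both sides of
   the first identity satisfy the q-difference equation (1 - zq) F(z) = q + q F(zq^2), and both
   sides of the second satisfy F(z) = 1 + (q + zq^2) F(zq^2): shifting the summation index relates
   the n-th term of F(zq^2) to the (n+1)-st term of F(z), and the discrepancy telescopes (for the
   left-hand sides this uses the shift rules of the products (a;q)_n and (a;q)_infinity).
   The difference G of the two sides then satisfies G(z) = beta(z) G(zq^2) with |beta| <= c < 1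
   near z = 0, and G is bounded there; as zq^(2N) tends to 0, iterating gives G(z) = 0. *)

section \<open>q-Pochhammer symbols\<close>

lemma qpoch_0 [simp]: "qpoch a Q 0 = 1"
  by (simp add: qpoch_def)

lemma qpoch_Suc: "qpoch a Q (Suc n) = qpoch a Q n * (1 - a * Q ^ n)"
  by (simp add: qpoch_def)

lemma qpoch_Suc_shift: "qpoch a Q (Suc n) = (1 - a) * qpoch (a * Q) Q n"
  unfolding qpoch_def by (subst prod.lessThan_Suc_shift) (simp add: mult.assoc)

lemma qpoch_nonzero: "(\<And>k. a * Q ^ k \<noteq> 1) \<Longrightarrow> qpoch a Q n \<noteq> 0"
  unfolding qpoch_def by (auto simp: prod_zero_iff)

context
  fixes Q :: complex
  assumes Q: "norm Q < 1"
begin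

lemma convergent_prod_qpoch: "convergent_prod (\<lambda>k. 1 - a * Q ^ k)"
proof -
  have "summable (\<lambda>k. norm a * norm Q ^ k)"
    using Q by (intro summable_mult summable_geometric) auto
  then have "summable (\<lambda>k. norm ((1 - a * Q ^ k) - 1))"
    by (simp add: norm_mult norm_power)
  then show ?thesis
    by (intro abs_convergent_prod_imp_convergent_prod summable_imp_abs_convergent_prod)
qed

lemma qpoch_inf_eq_prodinf: "qpoch_inf a Q = (\<Prod>k. 1 - a * Q ^ k)"
  and qpoch_LIMSEQ: "qpoch a Q \<longlonglongrightarrow> qpoch_inf a Q"
proof -
  have "(\<lambda>n. \<Prod>k\<le>n. 1 - a * Q ^ k) \<longlonglongrightarrow> (\<Prod>k. 1 - a * Q ^ k)"
    by (rule convergent_prod_LIMSEQ[OF convergent_prod_qpoch])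
  then have lim: "qpoch a Q \<longlonglongrightarrow> (\<Prod>k. 1 - a * Q ^ k)"
    unfolding qpoch_def by (simp add: LIMSEQ_lessThan_iff_atMost)
  then show "qpoch_inf a Q = (\<Prod>k. 1 - a * Q ^ k)"
    unfolding qpoch_inf_def by (rule limI)
  with lim show "qpoch a Q \<longlonglongrightarrow> qpoch_inf a Q"
    by simp
qed

lemma qpoch_inf_shift: "qpoch_inf a Q = (1 - a) * qpoch_inf (a * Q) Q"
proof (rule LIMSEQ_unique)
  show "(\<lambda>n. qpoch a Q (Suc n)) \<longlonglongrightarrow> qpoch_inf a Q"
    using qpoch_LIMSEQ by (rule LIMSEQ_Suc)
  show "(\<lambda>n. qpoch a Q (Suc n)) \<longlonglongrightarrow> (1 - a) * qpoch_inf (a * Q) Q"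
    unfolding qpoch_Suc_shift by (intro tendsto_mult tendsto_const qpoch_LIMSEQ)
qed

lemma qpoch_inf_nonzero: "(\<And>k. a * Q ^ k \<noteq> 1) \<Longrightarrow> qpoch_inf a Q \<noteq> 0"
  unfolding qpoch_inf_eq_prodinf by (intro prodinf_nonzero convergent_prod_qpoch) auto

lemma norm_qpoch_minus_one_le: "norm (qpoch a Q n - 1) \<le> exp (norm a / (1 - norm Q)) - 1"
proof -
  have geom: "(\<lambda>k. norm a * norm Q ^ k) sums (norm a / (1 - norm Q))"
    using Q sums_mult[OF geometric_sums, of "norm Q" "norm a"] by simp
  have "norm (qpoch a Q n - 1) = norm ((\<Prod>k<n. 1 + (- (a * Q ^ k))) - 1)"
    unfolding qpoch_def by simp
  also have "\<dots> \<le> (\<Prod>k<n. 1 + norm (- (a * Q ^ k))) - 1"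
    by (rule norm_prod_minus1_le_prod_minus1)
  also have "(\<Prod>k<n. 1 + norm (- (a * Q ^ k))) \<le> (\<Prod>k<n. exp (norm a * norm Q ^ k))"
    by (intro prod_mono) (auto simp: norm_mult norm_power)
  also have "\<dots> = exp (\<Sum>k<n. norm a * norm Q ^ k)"
    by (simp add: exp_sum)
  also have "(\<Sum>k<n. norm a * norm Q ^ k) \<le> (\<Sum>k. norm a * norm Q ^ k)"
    using geom by (intro sum_le_suminf) (auto simp: sums_iff)
  also have "\<dots> = norm a / (1 - norm Q)"
    using geom by (simp add: sums_iff)
  finally show ?thesis
    by simp
qed

lemma norm_qpoch_inf_minus_one_le: "norm (qpoch_inf a Q - 1) \<le> exp (norm a / (1 - norm Q)) - 1"
proof (rule LIMSEQ_le_const2)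
  show "(\<lambda>n. norm (qpoch a Q n - 1)) \<longlonglongrightarrow> norm (qpoch_inf a Q - 1)"
    by (intro tendsto_intros qpoch_LIMSEQ)
qed (use norm_qpoch_minus_one_le in auto)

lemma norm_qpoch_le: "norm (qpoch a Q n) \<le> exp (norm a / (1 - norm Q))"
  using norm_qpoch_minus_one_le[of a n] norm_triangle_ineq2[of "qpoch a Q n" 1] by simp

lemma norm_qpoch_inf_le: "norm (qpoch_inf a Q) \<le> exp (norm a / (1 - norm Q))"
  using norm_qpoch_inf_minus_one_le[of a] norm_triangle_ineq2[of "qpoch_inf a Q" 1] by simp

lemma norm_qpoch_ge_half:
  assumes "norm a \<le> (1 - norm Q) / 4"
  shows "1/2 \<le> norm (qpoch a Q n)" and "1/2 \<le> norm (qpoch_inf a Q)"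
proof -
  have "exp (norm a / (1 - norm Q)) \<le> exp (1/4)"
    using assms Q by (simp add: field_simps)
  also have "exp (1/4 :: real) \<le> 3/2"
    using exp_bound[of "1/4"] by (simp add: power2_eq_square)
  finally have exp_le: "exp (norm a / (1 - norm Q)) \<le> 3/2" .
  have "1/2 \<le> norm x" if "norm (x - 1) \<le> exp (norm a / (1 - norm Q)) - 1" for x :: complex
  proof -
    have "1 - norm (x - 1) \<le> norm x"
      using norm_triangle_ineq2[of 1 "1 - x"] by (simp add: norm_minus_commute)
    with that exp_le show ?thesis
      by linarith
  qed
  then show "1/2 \<le> norm (qpoch a Q n)" "1/2 \<le> norm (qpoch_inf a Q)"
    using norm_qpoch_minus_one_le norm_qpoch_inf_minus_one_le by blast+
qed

lemma qpoch_tendsto_one: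
  assumes "a \<longlonglongrightarrow> 0"
  shows "(\<lambda>n. qpoch (a n) Q (m n)) \<longlonglongrightarrow> 1" and "(\<lambda>n. qpoch_inf (a n) Q) \<longlonglongrightarrow> 1"
proof -
  have bound: "(\<lambda>n. exp (norm (a n) / (1 - norm Q)) - 1) \<longlonglongrightarrow> 0"
    using assms Q by (auto intro!: tendsto_eq_intros)
  show "(\<lambda>n. qpoch (a n) Q (m n)) \<longlonglongrightarrow> 1"
    by (rule LIM_zero_cancel, rule Lim_null_comparison[OF _ bound])
       (use norm_qpoch_minus_one_le in auto)
  show "(\<lambda>n. qpoch_inf (a n) Q) \<longlonglongrightarrow> 1"
    by (rule LIM_zero_cancel, rule Lim_null_comparison[OF _ bound])
       (use norm_qpoch_inf_minus_one_le in auto)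
qed

end

(* A normal form for powers of q: every power is split into factors q and q ^ n, so that
   identities between exponents reduce to AC-rewriting. *)
lemmas power_expand_simps = power_add power_mult power_mult_distrib power_numeral_reduce

lemma qpoch_mult_q_Suc:
  "qpoch (y * q) (q ^ 2) (Suc n + 1) = qpoch (y * q) (q ^ 2) (n + 1) * (1 - y * q ^ (2 * n + 3))"
  by (simp add: qpoch_Suc power_expand_simps mult_ac)

context
  fixes q :: complex
  assumes q: "norm q < 1"
begin

lemma norm_power2_le: "norm (q ^ 2) \<le> norm q"
proof -
  have "norm q ^ 2 \<le> norm q ^ 1"
    using q by (intro power_decreasing) auto
  then show ?thesis
    by (simp add: norm_power)
qed

lemma norm_power2_less_one: "norm (q ^ 2) < 1"
  using norm_power2_le q by simp

lemma norm_mult_power_le: "norm z \<le> 1 \<Longrightarrow> norm (z * q ^ k) \<le> norm z"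
  using q by (simp add: norm_mult norm_power mult_left_le power_le_one)

lemma mult_power_neq_one: "norm z \<le> 1 \<Longrightarrow> 0 < k \<Longrightarrow> z * q ^ k \<noteq> 1"
proof
  assume "norm z \<le> 1" "0 < k" "z * q ^ k = 1"
  have "norm q ^ k \<le> norm q ^ 1"
    using q \<open>0 < k\<close> by (intro power_decreasing) auto
  then have "norm (z * q ^ k) \<le> 1 * norm q"
    using \<open>norm z \<le> 1\<close> unfolding norm_mult norm_power by (intro mult_mono) auto
  with q \<open>z * q ^ k = 1\<close> show False
    by simp
qed

lemma power_linear_LIMSEQ_zero: "0 < a \<Longrightarrow> (\<lambda>n. q ^ (a * n + b)) \<longlonglongrightarrow> 0"
proof -
  assume "0 < a"
  then have "norm (q ^ a) < 1"
    using q by (simp add: norm_power power_less_one_iff)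
  then have "(\<lambda>n. q ^ b * (q ^ a) ^ n) \<longlonglongrightarrow> q ^ b * 0"
    by (intro tendsto_intros LIMSEQ_power_zero)
  moreover have "q ^ (a * n + b) = q ^ b * (q ^ a) ^ n" for n
    by (simp add: power_add power_mult)
  ultimately show ?thesis
    by simp
qed

lemma qpoch_mult_q_nonzero: "norm y \<le> 1 \<Longrightarrow> qpoch (y * q) (q ^ 2) n \<noteq> 0"
  using mult_power_neq_one[of y "2 * k + 1" for k]
  by (intro qpoch_nonzero) (simp add: power_expand_simps mult_ac)

end

section \<open>Contracting recurrences\<close>

lemma summable_norm_if_ratio_tendsto_zero:
  fixes f r :: "nat \<Rightarrow> 'a :: real_normed_div_algebra"
  assumes ratio: "\<And>n. f (Suc n) = r n * f n" and "r \<longlonglongrightarrow> 0"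
  shows "summable (\<lambda>n. norm (f n))"
proof -
  have "eventually (\<lambda>n. norm (r n) < 1/2) sequentially"
    using assms(2) by (intro order_tendstoD(2)[OF tendsto_norm_zero]) auto
  then obtain N where N: "\<And>n. n \<ge> N \<Longrightarrow> norm (r n) < 1/2"
    by (auto simp: eventually_at_top_linorder)
  show ?thesis
  proof (rule summable_ratio_test[of "1/2" N])
    fix n assume "n \<ge> N"
    then have "norm (r n) * norm (f n) \<le> 1/2 * norm (f n)"
      using N[of n] by (intro mult_right_mono) auto
    then show "norm (norm (f (Suc n))) \<le> 1/2 * norm (norm (f n))"
      by (simp add: ratio norm_mult)
  qed simp
qed

lemma eq_zero_if_contracting_recurrence:
  fixes g \<gamma> :: "nat \<Rightarrow> 'a :: real_normed_div_algebra"
  assumes rec: "\<And>N. g N = \<gamma> N * g (Suc N)"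
    and contr: "\<And>N. N \<ge> N0 \<Longrightarrow> norm (\<gamma> N) \<le> c" and "c < 1"
    and bounded: "\<And>N. N \<ge> N0 \<Longrightarrow> norm (g N) \<le> B"
  shows "g 0 = 0"
proof -
  have "0 \<le> c"
    using contr[of N0] norm_ge_zero[of "\<gamma> N0"] by linarith
  have iterate: "norm (g N) \<le> c ^ k * B" if "N \<ge> N0" for k N
    using that
  proof (induction k arbitrary: N)
    case (Suc k)
    have "norm (g N) = norm (\<gamma> N) * norm (g (Suc N))"
      by (subst rec) (simp add: norm_mult)
    also have "\<dots> \<le> c * (c ^ k * B)"
      using Suc \<open>0 \<le> c\<close> contr by (intro mult_mono) auto
    finally show ?case
      by simp
  qed (use bounded in simp)
  have vanish: "g N = 0" if "N \<ge> N0" for N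
  proof -
    have "(\<lambda>k. c ^ k * B) \<longlonglongrightarrow> 0"
      using \<open>c < 1\<close> \<open>0 \<le> c\<close> by (intro tendsto_mult_left_zero LIMSEQ_power_zero) auto
    then have "norm (g N) \<le> 0"
      by (rule LIMSEQ_le_const) (use iterate that in auto)
    then show ?thesis
      by simp
  qed
  show "g 0 = 0"
  proof (rule inc_induct[of 0 N0])
    fix n
    assume "g (Suc n) = 0"
    then show "g n = 0"
      using rec[of n] by simp
  qed (use vanish in auto)
qed

lemma eq_zero_if_functional_equation:
  fixes G \<beta> :: "'a :: real_normed_div_algebra \<Rightarrow> 'a"
  assumes Q: "norm Q < 1" and z: "norm z \<le> 1"
    and fe: "\<And>w. norm w \<le> 1 \<Longrightarrow> G w = \<beta> w * G (w * Q)"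
    and "0 < r" and "c < 1"
    and contr: "\<And>w. norm w \<le> 1 \<Longrightarrow> norm w \<le> r \<Longrightarrow> norm (\<beta> w) \<le> c"
    and bounded: "\<And>w. norm w \<le> 1 \<Longrightarrow> norm w \<le> r \<Longrightarrow> norm (G w) \<le> B"
  shows "G z = 0"
proof -
  have small: "norm (z * Q ^ N) \<le> 1" for N
    using z Q by (simp add: norm_mult norm_power mult_le_one power_le_one)
  have "(\<lambda>N. norm (z * Q ^ N)) \<longlonglongrightarrow> 0"
    using Q by (intro tendsto_norm_zero tendsto_mult_right_zero LIMSEQ_power_zero) auto
  then have "eventually (\<lambda>N. norm (z * Q ^ N) < r) sequentially"
    using \<open>0 < r\<close> by (rule order_tendstoD)
  then obtain N0 where N0: "\<And>N. N \<ge> N0 \<Longrightarrow> norm (z * Q ^ N) \<le> r"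
    unfolding eventually_at_top_linorder by (meson less_imp_le)
  have "(\<lambda>N. G (z * Q ^ N)) 0 = 0"
  proof (rule eq_zero_if_contracting_recurrence)
    show "G (z * Q ^ N) = \<beta> (z * Q ^ N) * G (z * Q ^ Suc N)" for N
      using fe[OF small[of N]] by (simp add: mult.assoc power_commutes)
  qed (use N0 small contr bounded \<open>c < 1\<close> in auto)
  then show ?thesis
    by simp
qed

section \<open>The second identity\<close>

definition rhs2 :: "complex \<Rightarrow> complex \<Rightarrow> nat \<Rightarrow> complex" where
  "rhs2 q z n = z ^ n * q ^ (n ^ 2 + n) / qpoch q (q ^ 2) (n + 1)"

definition lhs2 :: "complex \<Rightarrow> complex \<Rightarrow> nat \<Rightarrow> complex" where
  "lhs2 q z n = q ^ n * qpoch (- z * q ^ (n + 1)) q n * qpoch_inf (- z * q ^ (2 * n + 2)) (q ^ 2)"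

definition lhs2_prod :: "complex \<Rightarrow> complex \<Rightarrow> nat \<Rightarrow> complex" where
  "lhs2_prod q w m = qpoch (- w * q ^ (m + 1)) q m * qpoch_inf (- w * q ^ (2 * m + 2)) (q ^ 2)"

lemma lhs2_eq_lhs2_prod: "lhs2 q w m = q ^ m * lhs2_prod q w m"
  by (simp add: lhs2_def lhs2_prod_def mult.assoc)

lemma rhs2_scale: "rhs2 q (z * q ^ 2) n = (q ^ 2) ^ n * rhs2 q z n"
  by (simp add: rhs2_def power_mult_distrib)

context
  fixes q :: complex
  assumes q: "norm q < 1"
begin

lemma rhs2_Suc: "rhs2 q z (Suc n) = z * q ^ (2 * n + 2) / (1 - q ^ (2 * n + 3)) * rhs2 q z n"
proof -
  have numer: "q ^ (Suc n ^ 2 + Suc n) = q ^ (2 * n + 2) * q ^ (n ^ 2 + n)"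
    by (simp add: power_expand_simps mult_ac)
  have denom: "qpoch q (q ^ 2) (Suc n + 1) = qpoch q (q ^ 2) (n + 1) * (1 - q ^ (2 * n + 3))"
    using qpoch_mult_q_Suc[where y = 1] by simp
  have "1 - q ^ (2 * n + 3) \<noteq> 0"
    using mult_power_neq_one[OF q, of 1 "2 * n + 3"] by auto
  then show ?thesis
    unfolding rhs2_def numer denom
    using qpoch_mult_q_nonzero[OF q, of 1 "n + 1"] by (simp add: field_simps)
qed

lemma summable_norm_rhs2: "summable (\<lambda>n. norm (rhs2 q z n))"
proof (rule summable_norm_if_ratio_tendsto_zero[of "rhs2 q z", OF rhs2_Suc])
  have "(\<lambda>n. z * q ^ (2 * n + 2) / (1 - q ^ (2 * n + 3))) \<longlonglongrightarrow> z * 0 / (1 - 0)"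
    by (intro tendsto_intros power_linear_LIMSEQ_zero[OF q]) auto
  then show "(\<lambda>n. z * q ^ (2 * n + 2) / (1 - q ^ (2 * n + 3))) \<longlonglongrightarrow> 0"
    by simp
qed

lemma rhs2_functional_equation: "suminf (rhs2 q z) = 1 + (q + z * q ^ 2) * suminf (rhs2 q (z * q ^ 2))"
proof -
  define h where "h n = rhs2 q z n - q * rhs2 q (z * q ^ 2) n" for n
  have summable: "summable (rhs2 q z)" "summable (rhs2 q (z * q ^ 2))"
    using summable_norm_rhs2 summable_norm_cancel by blast+
  have h0: "h 0 = 1"
    using mult_power_neq_one[OF q, of 1 1] by (simp add: h_def rhs2_def qpoch_def field_simps)
  have hSuc: "h (Suc n) = z * q ^ 2 * rhs2 q (z * q ^ 2) n" for n
  proof -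
    have "h (Suc n) = (1 - q ^ (2 * n + 3)) * rhs2 q z (Suc n)"
      unfolding h_def rhs2_scale by (simp add: power_expand_simps algebra_simps)
    also have "\<dots> = z * q ^ (2 * n + 2) * rhs2 q z n"
      using mult_power_neq_one[OF q, of 1 "2 * n + 3"] by (simp add: rhs2_Suc)
    also have "\<dots> = z * q ^ 2 * rhs2 q (z * q ^ 2) n"
      unfolding rhs2_scale by (simp add: power_expand_simps mult_ac)
    finally show ?thesis .
  qed
  have "h sums (suminf (rhs2 q z) - q * suminf (rhs2 q (z * q ^ 2)))"
    unfolding h_def using summable by (intro sums_diff sums_mult summable_sums)
  then have "(\<lambda>n. h (Suc n)) sums (suminf (rhs2 q z) - q * suminf (rhs2 q (z * q ^ 2)) - h 0)"
    by (simp add: sums_Suc_iff)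
  then have "(\<lambda>n. z * q ^ 2 * rhs2 q (z * q ^ 2) n)
      sums (suminf (rhs2 q z) - q * suminf (rhs2 q (z * q ^ 2)) - 1)"
    unfolding hSuc h0 .
  moreover have "(\<lambda>n. z * q ^ 2 * rhs2 q (z * q ^ 2) n) sums (z * q ^ 2 * suminf (rhs2 q (z * q ^ 2)))"
    using summable by (intro sums_mult summable_sums)
  ultimately show ?thesis
    by (auto simp: algebra_simps dest: sums_unique2)
qed

lemma norm_suminf_rhs2_le: "norm w \<le> 1 \<Longrightarrow> norm (suminf (rhs2 q w)) \<le> (\<Sum>n. norm (rhs2 q 1 n))"
proof (rule norm_suminf_le)
  fix n
  assume "norm w \<le> 1"
  then have "norm w ^ n * norm (rhs2 q 1 n) \<le> norm (rhs2 q 1 n)"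
    by (intro mult_left_le_one_le) (auto simp: power_le_one)
  then show "norm (rhs2 q w n) \<le> norm (rhs2 q 1 n)"
    by (simp add: rhs2_def norm_mult norm_divide norm_power)
qed (rule summable_norm_rhs2)

lemma norm_lhs2_le:
  assumes z: "norm z \<le> 1"
  shows "norm (lhs2 q z n) \<le> norm q ^ n * exp (1 / (1 - norm q)) ^ 2"
proof -
  have exp_le: "exp (norm a / (1 - norm Q)) \<le> exp (1 / (1 - norm q))"
    if "norm a \<le> 1" "norm Q \<le> norm q" for a Q :: complex
    using that q by (intro exp_mono frac_le) auto
  have small: "norm (- z * q ^ k) \<le> 1" for k
    using norm_mult_power_le[OF q z, of k] z by simp
  have "norm (qpoch (- z * q ^ (n + 1)) q n) \<le> exp (1 / (1 - norm q))"
    by (rule order_trans[OF norm_qpoch_le[OF q] exp_le[OF small order_refl]])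
  moreover have "norm (qpoch_inf (- z * q ^ (2 * n + 2)) (q ^ 2)) \<le> exp (1 / (1 - norm q))"
    by (rule order_trans[OF norm_qpoch_inf_le[OF norm_power2_less_one[OF q]]
          exp_le[OF small norm_power2_le[OF q]]])
  ultimately show ?thesis
    unfolding lhs2_def norm_mult norm_power power2_eq_square mult.assoc
    by (intro mult_left_mono mult_mono) auto
qed

lemma summable_norm_lhs2: "norm z \<le> 1 \<Longrightarrow> summable (\<lambda>n. norm (lhs2 q z n))"
  by (rule summable_comparison_test[OF _ summable_mult2[OF summable_geometric]])
     (use norm_lhs2_le q in auto)

lemma norm_suminf_lhs2_le:
  "norm z \<le> 1 \<Longrightarrow> norm (suminf (lhs2 q z)) \<le> (\<Sum>n. norm q ^ n * exp (1 / (1 - norm q)) ^ 2)"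
  by (rule norm_suminf_le[OF norm_lhs2_le summable_mult2[OF summable_geometric]]) (use q in auto)

lemma lhs2_Suc: "lhs2 q z (n + 1) = q * (1 + z * q ^ (n + 2)) * lhs2 q (z * q ^ 2) n"
proof -
  have step: "- z * q ^ (n + 1 + 1) * q = - (z * q ^ 2) * q ^ (n + 1)"
    by (simp add: power_expand_simps mult_ac)
  have shift: "qpoch (- z * q ^ (n + 1 + 1)) q (n + 1)
      = (1 - - z * q ^ (n + 1 + 1)) * qpoch (- (z * q ^ 2) * q ^ (n + 1)) q n"
    using qpoch_Suc_shift[of "- z * q ^ (n + 1 + 1)" q n, unfolded step] by simp
  have arg: "- z * q ^ (2 * (n + 1) + 2) = - (z * q ^ 2) * q ^ (2 * n + 2)"
    by (simp add: power_expand_simps mult_ac)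
  show ?thesis
    unfolding lhs2_def shift arg by (simp add: mult_ac)
qed

lemma lhs2_prod_Suc:
  "lhs2_prod q w m * (1 + w * q ^ (2 * m + 1)) = (1 + w * q ^ (m + 1)) * lhs2_prod q w (m + 1)"
proof -
  define P where "P = qpoch (- w * q ^ (m + 1)) q"
  have "P (m + 2) = P m * (1 + w * q ^ (2 * m + 1)) * (1 + w * q ^ (2 * m + 2))"
    by (simp add: P_def numeral_2_eq_2 qpoch_Suc power_expand_simps mult_ac)
  moreover have "P (m + 2) = (1 + w * q ^ (m + 1)) * qpoch (- w * q ^ (m + 1 + 1)) q (m + 1)"
    using qpoch_Suc_shift[of "- w * q ^ (m + 1)" q "m + 1"]
    by (simp add: P_def numeral_2_eq_2 power_expand_simps mult_ac)
  moreover have "qpoch_inf (- w * q ^ (2 * m + 2)) (q ^ 2)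
      = (1 + w * q ^ (2 * m + 2)) * qpoch_inf (- w * q ^ (2 * (m + 1) + 2)) (q ^ 2)"
    using qpoch_inf_shift[OF norm_power2_less_one[OF q], of "- w * q ^ (2 * m + 2)"]
    by (simp add: power_expand_simps mult_ac)
  ultimately show ?thesis
    unfolding lhs2_prod_def P_def[symmetric] by (simp add: mult_ac)
qed

lemma lhs2_telescoping: "(\<lambda>n. w * (1 - q ^ (n + 1)) * lhs2 q w n) sums (qpoch_inf (- w) (q ^ 2) - 1)"
proof -
  define s where "s m = (1 + w * q ^ m) * lhs2_prod q w m" for m
  have "w * (1 - q ^ (n + 1)) * lhs2 q w n = s n - s (Suc n)" for n
  proof -
    have "s (Suc n) = lhs2_prod q w n * (1 + w * q ^ (2 * n + 1))"
      using lhs2_prod_Suc[of w n] by (simp add: s_def)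
    then show ?thesis
      unfolding s_def lhs2_eq_lhs2_prod by (simp add: power_expand_simps algebra_simps)
  qed
  moreover have "s \<longlonglongrightarrow> (1 + w * 0) * (1 * 1)"
    unfolding s_def lhs2_prod_def
    by (intro tendsto_intros LIMSEQ_power_zero q qpoch_tendsto_one[OF q]
          qpoch_tendsto_one[OF norm_power2_less_one[OF q]] tendsto_mult_right_zero
          power_linear_LIMSEQ_zero[OF q, of 1, simplified] power_linear_LIMSEQ_zero[OF q]) auto
  then have "(\<lambda>n. s n - s (Suc n)) sums (s 0 - 1)"
    by (intro telescope_sums') simp
  moreover have "s 0 = qpoch_inf (- w) (q ^ 2)"
    using qpoch_inf_shift[OF norm_power2_less_one[OF q], of "- w"]
    by (simp add: s_def lhs2_prod_def power2_eq_square)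
  ultimately show ?thesis
    by simp
qed

lemma lhs2_functional_equation:
  assumes z: "norm z \<le> 1"
  shows "suminf (lhs2 q z) = 1 + (q + z * q ^ 2) * suminf (lhs2 q (z * q ^ 2))"
proof -
  define w where "w = z * q ^ 2"
  have "norm w \<le> 1"
    using norm_mult_power_le[OF q z, of 2] z unfolding w_def by linarith
  then have summable: "summable (lhs2 q z)" "summable (lhs2 q w)"
    using summable_norm_cancel[OF summable_norm_lhs2] z by auto
  have "lhs2 q z (Suc n) = (q + z * q ^ 2) * lhs2 q w n - w * (1 - q ^ (n + 1)) * lhs2 q w n" for n
    using lhs2_Suc[of z n] by (simp add: w_def power_expand_simps algebra_simps)
  moreover have "(\<lambda>n. (q + z * q ^ 2) * lhs2 q w n - w * (1 - q ^ (n + 1)) * lhs2 q w n)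
      sums ((q + z * q ^ 2) * suminf (lhs2 q w) - (qpoch_inf (- w) (q ^ 2) - 1))"
    by (intro sums_diff sums_mult summable_sums summable lhs2_telescoping)
  ultimately have "(\<lambda>n. lhs2 q z (Suc n))
      sums ((q + z * q ^ 2) * suminf (lhs2 q w) - (qpoch_inf (- w) (q ^ 2) - 1))"
    by simp
  moreover have "(\<lambda>n. lhs2 q z (Suc n)) sums (suminf (lhs2 q z) - lhs2 q z 0)"
    using summable(1) by (simp add: sums_Suc_iff summable_sums)
  moreover have "lhs2 q z 0 = qpoch_inf (- w) (q ^ 2)"
    by (simp add: lhs2_def w_def power2_eq_square)
  ultimately show ?thesis
    unfolding w_def by (auto simp: algebra_simps dest: sums_unique2)
qed

end

lemma lhs2_sums_rhs2:
  fixes q z :: complex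
  assumes q: "norm q < 1" and z: "norm z \<le> 1"
  shows "summable (rhs2 q z) \<and> lhs2 q z sums suminf (rhs2 q z)"
proof -
  define G where "G w = suminf (lhs2 q w) - suminf (rhs2 q w)" for w
  have "G z = 0"
  proof (rule eq_zero_if_functional_equation[OF norm_power2_less_one[OF q] z,
        where \<beta> = "\<lambda>w. q + w * q ^ 2" and r = "(1 - norm q) / 2" and c = "(1 + norm q) / 2"
          and B = "(\<Sum>n. norm q ^ n * exp (1 / (1 - norm q)) ^ 2) + (\<Sum>n. norm (rhs2 q 1 n))"])
    show "G w = (q + w * q ^ 2) * G (w * q ^ 2)" if "norm w \<le> 1" for w
      using lhs2_functional_equation[OF q that] rhs2_functional_equation[OF q, of w]
      by (simp add: G_def algebra_simps)
    show "norm (q + w * q ^ 2) \<le> (1 + norm q) / 2" if "norm w \<le> 1" "norm w \<le> (1 - norm q) / 2" for w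
      using norm_triangle_ineq[of q "w * q ^ 2"] norm_mult_power_le[OF q that(1), of 2] that(2)
      by (simp add: field_simps)
    show "norm (G w) \<le> (\<Sum>n. norm q ^ n * exp (1 / (1 - norm q)) ^ 2) + (\<Sum>n. norm (rhs2 q 1 n))"
      if "norm w \<le> 1" for w
      unfolding G_def
      by (rule order_trans[OF norm_triangle_ineq4
            add_mono[OF norm_suminf_lhs2_le[OF q that] norm_suminf_rhs2_le[OF q that]]])
  qed (use q in auto)
  then have "suminf (lhs2 q z) = suminf (rhs2 q z)"
    by (simp add: G_def)
  then show ?thesis
    using summable_norm_cancel[OF summable_norm_lhs2[OF q z]] summable_norm_cancel[OF summable_norm_rhs2[OF q]]
    by (metis summable_sums)
qed

section \<open>The first identity\<close>

definition rhs1 :: "complex \<Rightarrow> complex \<Rightarrow> nat \<Rightarrow> complex" where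
  "rhs1 q z n = z ^ n * q ^ (2 * n ^ 2 + 2 * n + 1) / (qpoch q (q ^ 2) (n + 1) * qpoch (z * q) (q ^ 2) (n + 1))"

definition lhs1 :: "complex \<Rightarrow> complex \<Rightarrow> nat \<Rightarrow> complex" where
  "lhs1 q z n = q ^ (n + 1) / (qpoch (z * q ^ (n + 1)) q (n + 2) * qpoch_inf (z * q ^ (2 * (n + 1) + 2)) (q ^ 2))"

definition lhs1_denom :: "complex \<Rightarrow> complex \<Rightarrow> nat \<Rightarrow> complex" where
  "lhs1_denom q z m = qpoch (z * q ^ (m + 2)) q m * qpoch_inf (z * q ^ (2 * m + 2)) (q ^ 2)"

context
  fixes q :: complex
  assumes q: "norm q < 1"
begin

lemma rhs1_Suc:
  assumes z: "norm z \<le> 1"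
  shows "rhs1 q z (Suc n)
    = z * q ^ (2 * n + 1) * q ^ (2 * n + 3) / ((1 - q ^ (2 * n + 3)) * (1 - z * q ^ (2 * n + 3))) * rhs1 q z n"
proof -
  have numer: "q ^ (2 * Suc n ^ 2 + 2 * Suc n + 1) = q ^ (2 * n + 1) * q ^ (2 * n + 3) * q ^ (2 * n ^ 2 + 2 * n + 1)"
    by (simp add: power_expand_simps mult_ac)
  have denom: "qpoch q (q ^ 2) (Suc n + 1) = qpoch q (q ^ 2) (n + 1) * (1 - q ^ (2 * n + 3))"
    using qpoch_mult_q_Suc[where y = 1] by simp
  have "1 - q ^ (2 * n + 3) \<noteq> 0" "1 - z * q ^ (2 * n + 3) \<noteq> 0"
    using mult_power_neq_one[OF q, of 1 "2 * n + 3"] mult_power_neq_one[OF q z, of "2 * n + 3"] by auto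
  then show ?thesis
    unfolding rhs1_def numer denom qpoch_mult_q_Suc
    using qpoch_mult_q_nonzero[OF q, of 1 "n + 1"] qpoch_mult_q_nonzero[OF q z, of "n + 1"]
    by (simp add: field_simps)
qed

lemma summable_norm_rhs1:
  assumes z: "norm z \<le> 1"
  shows "summable (\<lambda>n. norm (rhs1 q z n))"
proof (rule summable_norm_if_ratio_tendsto_zero[of "rhs1 q z", OF rhs1_Suc[OF z]])
  have "(\<lambda>n. z * q ^ (2 * n + 1) * q ^ (2 * n + 3) / ((1 - q ^ (2 * n + 3)) * (1 - z * q ^ (2 * n + 3))))
      \<longlonglongrightarrow> z * 0 * 0 / ((1 - 0) * (1 - z * 0))"
    by (intro tendsto_intros power_linear_LIMSEQ_zero[OF q]) auto
  then show "(\<lambda>n. z * q ^ (2 * n + 1) * q ^ (2 * n + 3) / ((1 - q ^ (2 * n + 3)) * (1 - z * q ^ (2 * n + 3))))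
      \<longlonglongrightarrow> 0"
    by simp
qed

lemma rhs1_scale:
  assumes z: "norm z \<le> 1"
  shows "rhs1 q (z * q ^ 2) n * (1 - z * q ^ (2 * n + 3)) = (q ^ 2) ^ n * (1 - z * q) * rhs1 q z n"
proof -
  define K D Y Y' where "K = q ^ (2 * n ^ 2 + 2 * n + 1)" and "D = qpoch q (q ^ 2) (n + 1)"
    and "Y = qpoch (z * q) (q ^ 2) (n + 1)" and "Y' = qpoch (z * q ^ 2 * q) (q ^ 2) (n + 1)"
  have "norm (z * q ^ 2) \<le> 1"
    using norm_mult_power_le[OF q z, of 2] z by linarith
  then have nonzero: "Y \<noteq> 0" "Y' \<noteq> 0"
    using qpoch_mult_q_nonzero[OF q z] qpoch_mult_q_nonzero[OF q] unfolding Y_def Y'_def by blast+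
  have comm: "z * q * q ^ 2 = z * q ^ 2 * q"
    by (simp add: mult_ac)
  have "Y * (1 - z * q ^ (2 * n + 3)) = (1 - z * q) * Y'"
    using qpoch_Suc_shift[of "z * q" "q ^ 2" "n + 1", unfolded comm] qpoch_mult_q_Suc[of z q n]
    unfolding Y_def Y'_def by simp
  then have shift: "(1 - z * q ^ (2 * n + 3)) / Y' = (1 - z * q) / Y"
    using nonzero by (simp add: field_simps)
  have "rhs1 q (z * q ^ 2) n * (1 - z * q ^ (2 * n + 3)) = (z * q ^ 2) ^ n * K / D * ((1 - z * q ^ (2 * n + 3)) / Y')"
    unfolding rhs1_def K_def D_def Y'_def by simp
  also have "\<dots> = (z * q ^ 2) ^ n * K / D * ((1 - z * q) / Y)"
    by (simp only: shift)
  also have "\<dots> = (q ^ 2) ^ n * (1 - z * q) * rhs1 q z n"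
    unfolding rhs1_def K_def D_def Y_def by (simp add: power_mult_distrib)
  finally show ?thesis .
qed

lemma rhs1_functional_equation:
  assumes z: "norm z \<le> 1"
  shows "(1 - z * q) * suminf (rhs1 q z) = q + q * suminf (rhs1 q (z * q ^ 2))"
proof -
  define w where "w = z * q ^ 2"
  have "norm w \<le> 1"
    using norm_mult_power_le[OF q z, of 2] z unfolding w_def by linarith
  then have summable: "summable (rhs1 q z)" "summable (rhs1 q w)"
    using summable_norm_cancel[OF summable_norm_rhs1] z by auto
  define T where "T n = (1 - z * q) * (1 - q ^ (2 * n + 1)) * rhs1 q z n" for n
  have "(1 - z * q) * rhs1 q z n - q * rhs1 q w n = T n - T (Suc n)" for n
  proof -
    define X Y where "X = q ^ (2 * n + 1)" and "Y = q ^ (2 * n + 3)"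
    have nonzero: "1 - Y \<noteq> 0" "1 - z * Y \<noteq> 0"
      using mult_power_neq_one[OF q, of 1 "2 * n + 3"] mult_power_neq_one[OF q z, of "2 * n + 3"]
      unfolding Y_def by auto
    have "q * rhs1 q w n * (1 - z * Y) = X * (1 - z * q) * rhs1 q z n"
      using rhs1_scale[OF z, of n] unfolding w_def X_def Y_def
      by (simp add: power_expand_simps mult_ac)
    then have "(1 - z * q) * rhs1 q z n - q * rhs1 q w n
        = (1 - z * q) * rhs1 q z n - X * (1 - z * q) * rhs1 q z n / (1 - z * Y)"
      using nonzero by (simp add: field_simps)
    also have "\<dots> = (1 - z * q) * (1 - X) * rhs1 q z n - (1 - z * q) * (z * X * Y / (1 - z * Y)) * rhs1 q z n"
      using nonzero by (simp add: field_simps)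
    also have "\<dots> = T n - T (Suc n)"
    proof -
      have "2 * Suc n + 1 = 2 * n + 3"
        by simp
      then have "T (Suc n) = (1 - z * q) * (1 - Y) * rhs1 q z (Suc n)"
        unfolding T_def Y_def by (simp only:)
      then show ?thesis
        using rhs1_Suc[OF z, of n, folded X_def Y_def] nonzero by (simp add: T_def X_def)
    qed
    finally show ?thesis .
  qed
  moreover have "T \<longlonglongrightarrow> (1 - z * q) * (1 - 0) * 0"
    unfolding T_def
    by (intro tendsto_intros power_linear_LIMSEQ_zero[OF q] summable_LIMSEQ_zero summable) auto
  then have "(\<lambda>n. T n - T (Suc n)) sums T 0"
    using telescope_sums'[of T 0] by simp
  moreover have "T 0 = q"
    using mult_power_neq_one[OF q, of 1 1] mult_power_neq_one[OF q z, of 1]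
    by (simp add: T_def rhs1_def qpoch_def)
  ultimately have "(\<lambda>n. (1 - z * q) * rhs1 q z n - q * rhs1 q w n) sums q"
    by simp
  moreover have "(\<lambda>n. (1 - z * q) * rhs1 q z n - q * rhs1 q w n)
      sums ((1 - z * q) * suminf (rhs1 q z) - q * suminf (rhs1 q w))"
    by (intro sums_diff sums_mult summable_sums summable)
  ultimately show ?thesis
    unfolding w_def by (auto simp: algebra_simps dest: sums_unique2)
qed

lemma norm_suminf_rhs1_le:
  assumes w: "norm w \<le> (1 - norm q) / 4"
  shows "norm (suminf (rhs1 q w)) \<le> 2 * (\<Sum>n. norm (rhs2 q 1 n))"
proof -
  have "norm w * 4 \<le> 1 - norm q"
    using w by simp
  then have "norm w \<le> 1"
    using norm_ge_zero[of q] by linarith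
  have "norm (rhs1 q w n) \<le> 2 * norm (rhs2 q 1 n)" for n
  proof -
    have "norm (w * q) \<le> norm w"
      using norm_mult_power_le[OF q \<open>norm w \<le> 1\<close>, of 1] by simp
    also have "\<dots> \<le> (1 - norm (q ^ 2)) / 4"
      using w norm_power2_le[OF q] by simp
    finally have "norm (w * q) \<le> (1 - norm (q ^ 2)) / 4" .
    then have "1/2 \<le> norm (qpoch (w * q) (q ^ 2) (n + 1))"
      by (rule norm_qpoch_ge_half(1)[OF norm_power2_less_one[OF q]])
    then have "1 / norm (qpoch (w * q) (q ^ 2) (n + 1)) \<le> 2"
      by (simp add: divide_le_eq)
    moreover have "norm w ^ n * norm q ^ (2 * n ^ 2 + 2 * n + 1) \<le> 1 * norm q ^ (n ^ 2 + n)"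
      using q \<open>norm w \<le> 1\<close> by (intro mult_mono power_le_one power_decreasing) auto
    moreover define D where "D = norm (qpoch q (q ^ 2) (n + 1))"
    ultimately have "norm w ^ n * norm q ^ (2 * n ^ 2 + 2 * n + 1) / D * (1 / norm (qpoch (w * q) (q ^ 2) (n + 1)))
        \<le> 1 * norm q ^ (n ^ 2 + n) / D * 2"
      by (intro mult_mono[OF divide_right_mono]) (auto simp: D_def)
    then show ?thesis
      by (simp add: rhs1_def rhs2_def D_def norm_mult norm_divide norm_power mult_ac)
  qed
  then have "norm (suminf (rhs1 q w)) \<le> (\<Sum>n. 2 * norm (rhs2 q 1 n))"
    by (intro norm_suminf_le summable_mult summable_norm_rhs2[OF q])
  then show ?thesis
    using suminf_mult[OF summable_norm_rhs2[OF q], of 2 1] by simp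
qed

lemma lhs1_denom_nonzero:
  assumes z: "norm z \<le> 1"
  shows "lhs1_denom q z m \<noteq> 0"
proof -
  have "z * q ^ (m + 2) * q ^ k \<noteq> 1" "z * q ^ (2 * m + 2) * (q ^ 2) ^ k \<noteq> 1" for k
    using mult_power_neq_one[OF q z, of "m + 2 + k"] mult_power_neq_one[OF q z, of "2 * m + 2 + 2 * k"]
    by (simp_all add: power_add power_mult mult.assoc)
  then show ?thesis
    unfolding lhs1_denom_def
    using qpoch_nonzero qpoch_inf_nonzero[OF norm_power2_less_one[OF q]] by auto
qed

lemma lhs1_denom_Suc: "lhs1_denom q z (m + 1) * (1 - z * q ^ (m + 2)) = lhs1_denom q z m * (1 - z * q ^ (2 * m + 3))"
proof -
  define R where "R = qpoch (z * q ^ (m + 2)) q"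
  have "R (Suc (Suc m)) = R m * (1 - z * q ^ (2 * m + 2)) * (1 - z * q ^ (2 * m + 3))"
    by (simp add: R_def qpoch_Suc power_expand_simps mult_ac)
  moreover have "R (Suc (Suc m)) = (1 - z * q ^ (m + 2)) * qpoch (z * q ^ (m + 1 + 2)) q (m + 1)"
    using qpoch_Suc_shift[of "z * q ^ (m + 2)" q "Suc m"]
    by (simp add: R_def power_expand_simps mult_ac)
  moreover have "qpoch_inf (z * q ^ (2 * m + 2)) (q ^ 2)
      = (1 - z * q ^ (2 * m + 2)) * qpoch_inf (z * q ^ (2 * (m + 1) + 2)) (q ^ 2)"
    using qpoch_inf_shift[OF norm_power2_less_one[OF q], of "z * q ^ (2 * m + 2)"]
    by (simp add: power_expand_simps mult_ac)
  ultimately show ?thesis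
    unfolding lhs1_denom_def R_def[symmetric] by (simp add: mult_ac)
qed

lemma lhs1_Suc: "lhs1 q z (n + 1) = q * lhs1 q (z * q ^ 2) n / (1 - z * q ^ (n + 2))"
proof -
  have step: "z * q ^ (n + 1 + 1) * q = z * q ^ 2 * q ^ (n + 1)"
    by (simp add: power_expand_simps mult_ac)
  have shift: "qpoch (z * q ^ (n + 1 + 1)) q (n + 1 + 2)
      = (1 - z * q ^ (n + 2)) * qpoch (z * q ^ 2 * q ^ (n + 1)) q (n + 2)"
    using qpoch_Suc_shift[of "z * q ^ (n + 1 + 1)" q "n + 2", unfolded step]
    by (simp add: numeral_2_eq_2)
  have arg: "z * q ^ (2 * (n + 1 + 1) + 2) = z * q ^ 2 * q ^ (2 * (n + 1) + 2)"
    by (simp add: power_expand_simps mult_ac)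
  show ?thesis
    unfolding lhs1_def shift arg by (simp add: field_simps)
qed

lemma lhs1_scaled_eq: "lhs1 q (z * q ^ 2) n = q ^ (n + 1) / lhs1_denom q z (n + 1)"
proof -
  define a where "a = z * q ^ (n + 1 + 2)"
  have "qpoch a q (n + 2) = qpoch a q (n + 1) * (1 - z * q ^ (2 * (n + 1) + 2))"
    using qpoch_Suc[of a q "n + 1"] by (simp add: a_def power_expand_simps mult_ac)
  moreover have "qpoch_inf (z * q ^ (2 * (n + 1) + 2)) (q ^ 2)
      = (1 - z * q ^ (2 * (n + 1) + 2)) * qpoch_inf (z * q ^ 2 * q ^ (2 * (n + 1) + 2)) (q ^ 2)"
    using qpoch_inf_shift[OF norm_power2_less_one[OF q], of "z * q ^ (2 * (n + 1) + 2)"]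
    by (simp add: power_expand_simps mult_ac)
  moreover have "z * q ^ 2 * q ^ (n + 1) = a"
    by (simp add: a_def power_expand_simps mult_ac)
  ultimately show ?thesis
    unfolding lhs1_def lhs1_denom_def a_def[symmetric] by (simp add: mult_ac)
qed

lemma lhs1_0:
  assumes z: "norm z \<le> 1"
  shows "(1 - z * q) * lhs1 q z 0 = q / lhs1_denom q z 0"
proof -
  define P where "P = qpoch_inf (z * q ^ 4) (q ^ 2)"
  have "qpoch (z * q) q (Suc (Suc 0)) = (1 - z * q) * (1 - z * q ^ 2)"
    by (simp add: qpoch_Suc power2_eq_square mult.assoc)
  then have "lhs1 q z 0 = q / ((1 - z * q) * ((1 - z * q ^ 2) * P))"
    by (simp add: lhs1_def P_def mult.assoc)
  moreover have "lhs1_denom q z 0 = (1 - z * q ^ 2) * P"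
  proof -
    have "lhs1_denom q z 0 = qpoch_inf (z * q ^ 2) (q ^ 2)"
      by (simp add: lhs1_denom_def power2_eq_square)
    also have "\<dots> = (1 - z * q ^ 2) * qpoch_inf (z * q ^ 2 * q ^ 2) (q ^ 2)"
      by (rule qpoch_inf_shift[OF norm_power2_less_one[OF q]])
    also have "z * q ^ 2 * q ^ 2 = z * q ^ 4"
      by (simp add: mult.assoc flip: power_add)
    finally show ?thesis
      unfolding P_def .
  qed
  moreover have "1 - z * q \<noteq> 0"
    using mult_power_neq_one[OF q z, of 1] by auto
  ultimately show ?thesis
    by simp
qed

lemma inverse_lhs1_denom_telescoping:
  assumes z: "norm z \<le> 1"
  shows "(\<lambda>n. z * q ^ (n + 2) * (1 - q ^ (n + 1)) / (1 - z * q ^ (n + 2)) * (1 / lhs1_denom q z (n + 1)))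
    sums (1 / lhs1_denom q z 0 - 1)"
proof -
  define c where "c n = 1 / lhs1_denom q z n" for n
  have "z * q ^ (n + 2) * (1 - q ^ (n + 1)) / (1 - z * q ^ (n + 2)) * (1 / lhs1_denom q z (n + 1))
      = c n - c (Suc n)" for n
  proof -
    define A B x y where "A = lhs1_denom q z n" and "B = lhs1_denom q z (n + 1)"
      and "x = z * q ^ (n + 2)" and "y = z * q ^ (2 * n + 3)"
    have nonzero: "A \<noteq> 0" "B \<noteq> 0" "1 - x \<noteq> 0"
      using lhs1_denom_nonzero[OF z] mult_power_neq_one[OF q z, of "n + 2"]
      unfolding A_def B_def x_def by auto
    have "B * (1 - x) = A * (1 - y)"
      using lhs1_denom_Suc[of z n] unfolding A_def B_def x_def y_def .
    then have ratio: "(x - y) / (1 - x) = (B - A) / A"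
      using nonzero by (simp add: field_simps)
    have "z * q ^ (n + 2) * (1 - q ^ (n + 1)) / (1 - z * q ^ (n + 2)) * (1 / lhs1_denom q z (n + 1))
        = (x - y) / (1 - x) * (1 / B)"
      unfolding x_def y_def B_def by (simp add: power_expand_simps algebra_simps)
    also have "\<dots> = 1 / A - 1 / B"
      unfolding ratio using nonzero by (simp add: field_simps)
    also have "\<dots> = c n - c (Suc n)"
      by (simp add: c_def A_def B_def)
    finally show ?thesis .
  qed
  moreover have "c \<longlonglongrightarrow> 1 / (1 * 1)"
    unfolding c_def lhs1_denom_def
    by (intro tendsto_intros qpoch_tendsto_one[OF q] qpoch_tendsto_one[OF norm_power2_less_one[OF q]]
          tendsto_mult_right_zero power_linear_LIMSEQ_zero[OF q, of 1, simplified]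
          power_linear_LIMSEQ_zero[OF q]) auto
  then have "(\<lambda>n. c n - c (Suc n)) sums (c 0 - 1)"
    by (intro telescope_sums') simp
  ultimately show ?thesis
    unfolding c_def by simp
qed

lemma norm_lhs1_le:
  assumes small: "norm (z * q ^ (n + 1)) \<le> (1 - norm q) / 4"
  shows "norm (lhs1 q z n) \<le> 4 * norm q ^ (n + 1)"
proof -
  have "norm (z * q ^ (2 * (n + 1) + 2)) = norm (z * q ^ (n + 1)) * norm q ^ (n + 3)"
    by (simp add: norm_mult norm_power power_expand_simps mult_ac)
  also have "\<dots> \<le> norm (z * q ^ (n + 1))"
    using q by (simp add: mult_left_le power_le_one)
  also have "\<dots> \<le> (1 - norm (q ^ 2)) / 4"
    using small norm_power2_le[OF q] by simp
  finally have "1/2 \<le> norm (qpoch_inf (z * q ^ (2 * (n + 1) + 2)) (q ^ 2))"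
    by (rule norm_qpoch_ge_half(2)[OF norm_power2_less_one[OF q]])
  moreover have "1/2 \<le> norm (qpoch (z * q ^ (n + 1)) q (n + 2))"
    by (rule norm_qpoch_ge_half(1)[OF q small])
  ultimately have "1/2 * (1/2) \<le> norm (qpoch (z * q ^ (n + 1)) q (n + 2)) * norm (qpoch_inf (z * q ^ (2 * (n + 1) + 2)) (q ^ 2))"
    by (intro mult_mono) auto
  then have "1 / (norm (qpoch (z * q ^ (n + 1)) q (n + 2)) * norm (qpoch_inf (z * q ^ (2 * (n + 1) + 2)) (q ^ 2))) \<le> 4"
    by (simp add: divide_le_eq)
  then have "norm q ^ (n + 1) * (1 / (norm (qpoch (z * q ^ (n + 1)) q (n + 2))
      * norm (qpoch_inf (z * q ^ (2 * (n + 1) + 2)) (q ^ 2)))) \<le> norm q ^ (n + 1) * 4"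
    by (intro mult_left_mono) auto
  then show ?thesis
    by (simp add: lhs1_def norm_divide norm_mult norm_power mult.commute)
qed

lemma summable_norm_lhs1:
  assumes z: "norm z \<le> 1"
  shows "summable (\<lambda>n. norm (lhs1 q z n))"
proof (rule summable_comparison_test_ev)
  have "(\<lambda>n. norm (z * q ^ (1 * n + 1))) \<longlonglongrightarrow> 0"
    by (intro tendsto_norm_zero tendsto_mult_right_zero power_linear_LIMSEQ_zero[OF q]) simp
  then have "eventually (\<lambda>n. norm (z * q ^ (n + 1)) < (1 - norm q) / 4) sequentially"
    using q by (intro order_tendstoD) auto
  then show "eventually (\<lambda>n. norm (norm (lhs1 q z n)) \<le> 4 * norm q ^ (n + 1)) sequentially"
    by eventually_elim (use norm_lhs1_le in auto)
  show "summable (\<lambda>n. 4 * norm q ^ (n + 1))"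
    using q by (simp add: summable_mult summable_geometric)
qed

lemma norm_suminf_lhs1_le:
  assumes w: "norm w \<le> (1 - norm q) / 4"
  shows "norm (suminf (lhs1 q w)) \<le> (\<Sum>n. 4 * norm q ^ (n + 1))"
proof (rule norm_suminf_le)
  have "norm w * 4 \<le> 1 - norm q"
    using w by simp
  then have "norm w \<le> 1"
    using norm_ge_zero[of q] by linarith
  then show "norm (lhs1 q w n) \<le> 4 * norm q ^ (n + 1)" for n
    using norm_mult_power_le[OF q, of w "n + 1"] w by (intro norm_lhs1_le) simp
  show "summable (\<lambda>n. 4 * norm q ^ (n + 1))"
    using q by (simp add: summable_mult summable_geometric)
qed

lemma lhs1_functional_equation:
  assumes z: "norm z \<le> 1"
  shows "(1 - z * q) * suminf (lhs1 q z) = q + q * suminf (lhs1 q (z * q ^ 2))"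
proof -
  define w where "w = z * q ^ 2"
  have "norm w \<le> 1"
    using norm_mult_power_le[OF q z, of 2] z unfolding w_def by linarith
  then have summable: "summable (lhs1 q z)" "summable (lhs1 q w)"
    using summable_norm_cancel[OF summable_norm_lhs1] z by auto
  define t where "t n = z * q ^ (n + 2) * (1 - q ^ (n + 1)) / (1 - z * q ^ (n + 2)) * (1 / lhs1_denom q z (n + 1))" for n
  have "(1 - z * q) * lhs1 q z (Suc n) = q * lhs1 q w n - q * t n" for n
  proof -
    define a B where "a = q ^ (n + 1)" and "B = lhs1_denom q z (n + 1)"
    have zq: "z * q ^ (n + 2) = z * q * a"
      unfolding a_def by (simp add: power_expand_simps mult_ac)
    have nonzero: "1 - z * q * a \<noteq> 0" "B \<noteq> 0"
      using mult_power_neq_one[OF q z, of "n + 2"] lhs1_denom_nonzero[OF z, of "n + 1"]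
      unfolding zq B_def by auto
    have "lhs1 q w n = a / B" "lhs1 q z (Suc n) = q * (a / B) / (1 - z * q * a)"
      using lhs1_Suc[of z n] lhs1_scaled_eq[of z n] unfolding w_def a_def B_def zq by simp_all
    then show ?thesis
      unfolding t_def zq a_def[symmetric] B_def[symmetric] using nonzero by (simp add: field_simps)
  qed
  moreover have "(\<lambda>n. q * lhs1 q w n - q * t n) sums (q * suminf (lhs1 q w) - q * (1 / lhs1_denom q z 0 - 1))"
    unfolding t_def by (intro sums_diff sums_mult summable_sums summable inverse_lhs1_denom_telescoping z)
  ultimately have "(\<lambda>n. (1 - z * q) * lhs1 q z (Suc n)) sums (q * suminf (lhs1 q w) - q * (1 / lhs1_denom q z 0 - 1))"
    by simp
  moreover have "(\<lambda>n. (1 - z * q) * lhs1 q z (Suc n)) sums ((1 - z * q) * suminf (lhs1 q z) - (1 - z * q) * lhs1 q z 0)"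
    using sums_mult[OF summable_sums[OF summable(1)], of "1 - z * q"] by (subst sums_Suc_iff) simp
  ultimately show ?thesis
    using lhs1_0[OF z] unfolding w_def by (auto simp: algebra_simps dest: sums_unique2)
qed

end

lemma lhs1_sums_rhs1:
  fixes q z :: complex
  assumes q: "norm q < 1" and z: "norm z \<le> 1"
  shows "summable (rhs1 q z) \<and> lhs1 q z sums suminf (rhs1 q z)"
proof -
  define G where "G w = suminf (lhs1 q w) - suminf (rhs1 q w)" for w
  define r where "r = (1 - norm q) / 4"
  have r: "0 < r" "norm q < 1 - r"
    using q by (simp_all add: r_def field_simps)
  then have "0 < 1 - r"
    using norm_ge_zero[of q] by linarith
  have "G z = 0"
  proof (rule eq_zero_if_functional_equation[OF norm_power2_less_one[OF q] z,
        where \<beta> = "\<lambda>w. q / (1 - w * q)" and r = r and c = "norm q / (1 - r)"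
          and B = "(\<Sum>n. 4 * norm q ^ (n + 1)) + 2 * (\<Sum>n. norm (rhs2 q 1 n))"])
    show "G w = q / (1 - w * q) * G (w * q ^ 2)" if "norm w \<le> 1" for w
    proof -
      have "(1 - w * q) * G w = q * G (w * q ^ 2)"
        unfolding G_def right_diff_distrib lhs1_functional_equation[OF q that]
          rhs1_functional_equation[OF q that] by simp
      moreover have "1 - w * q \<noteq> 0"
        using mult_power_neq_one[OF q that, of 1] by auto
      ultimately show ?thesis
        by (simp add: field_simps)
    qed
    show "norm (q / (1 - w * q)) \<le> norm q / (1 - r)" if "norm w \<le> 1" "norm w \<le> r" for w
    proof -
      have "1 - r \<le> 1 - norm (w * q)"
        using norm_mult_power_le[OF q that(1), of 1] that(2) by simp
      also have "\<dots> \<le> norm (1 - w * q)"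
        using norm_triangle_ineq2[of 1 "w * q"] by simp
      finally show ?thesis
        using \<open>0 < 1 - r\<close> unfolding norm_divide by (intro divide_left_mono mult_pos_pos) auto
    qed
    show "norm (G w) \<le> (\<Sum>n. 4 * norm q ^ (n + 1)) + 2 * (\<Sum>n. norm (rhs2 q 1 n))"
      if "norm w \<le> r" for w
    proof -
      have w: "norm w \<le> (1 - norm q) / 4"
        using that by (simp add: r_def)
      show ?thesis
        unfolding G_def
        by (rule order_trans[OF norm_triangle_ineq4
              add_mono[OF norm_suminf_lhs1_le[OF q w] norm_suminf_rhs1_le[OF q w]]])
    qed
  qed (use r \<open>0 < 1 - r\<close> in \<open>simp_all add: field_simps\<close>)
  then have "suminf (lhs1 q z) = suminf (rhs1 q z)"
    by (simp add: G_def)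
  then show ?thesis
    using summable_norm_cancel[OF summable_norm_lhs1[OF q z]] summable_norm_cancel[OF summable_norm_rhs1[OF q z]]
    by (metis summable_sums)
qed

theorem theorem1p1:
  fixes q z :: complex
  assumes "norm q < 1" and "norm z < 1"
  shows "summable (\<lambda>n. z ^ n * q ^ (2 * n ^ 2 + 2 * n + 1)
              / (qpoch q (q ^ 2) (n + 1) * qpoch (z * q) (q ^ 2) (n + 1)))
       \<and> (\<lambda>n. q ^ (n + 1)
              / (qpoch (z * q ^ (n + 1)) q (n + 2) * qpoch_inf (z * q ^ (2 * (n + 1) + 2)) (q ^ 2)))
           sums (\<Sum>n. z ^ n * q ^ (2 * n ^ 2 + 2 * n + 1)
              / (qpoch q (q ^ 2) (n + 1) * qpoch (z * q) (q ^ 2) (n + 1)))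
       \<and> summable (\<lambda>n. z ^ n * q ^ (n ^ 2 + n) / qpoch q (q ^ 2) (n + 1))
       \<and> (\<lambda>n. q ^ n * qpoch (- z * q ^ (n + 1)) q n * qpoch_inf (- z * q ^ (2 * n + 2)) (q ^ 2))
           sums (\<Sum>n. z ^ n * q ^ (n ^ 2 + n) / qpoch q (q ^ 2) (n + 1))"
  using lhs1_sums_rhs1[OF assms(1), of z] lhs2_sums_rhs2[OF assms(1), of z] assms(2)
  unfolding lhs1_def[abs_def] rhs1_def[abs_def] lhs2_def[abs_def] rhs2_def[abs_def]
  by simp

end
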